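(* Let $p$ be a prime and $(r,e,d)\in\mathscr{U}(p)$ with $r\mid p-1$; write $rs=p-1$. Then \[ \det M_d((x^r-1)^e)=(-1)^{d(d-1)/2+(r-1)g/2}\binom{e}{s}\binom{e}{2s}\cdots\binom{e}{ds}\quad\text{in }\mathbb{F}_p, \] and in particular $\det M_d((x^r-1)^e)\ne0$.
   Context: Let $p$ be a prime. For a polynomial $h(x)\in\mathbb{F}_p[x]$ and integers $e\ge0$, $0\le d\le p$, write $h(x)^e=\sum_{i\ge0}c_ix^i$ ($c_i=0$ for $i<0$) and let $M_d(h(x)^e)$ be the $d\times d$ matrix with $(i,j)$ entry $c_{ip+j-d-1}$. For integer triples put $g=\left\{red-\frac{d(d+1)}{2}(p-1)\right\}\big/\frac{r(r-1)}{2}\in\mathbb{Q}$. $\mathscr{U}(p)$ is the set of integer triples $(r,e,d)$ with $r\ge2$, $e\ge1$, $1\le d\le p$, $d(p-1)\le re\le r(p-1)$, $g>0$, and $g\in2\mathbb{Z}$ if $p\ne2$, $g\in\mathbb{Z}$ if $p=2$. *)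

theory Defs
  imports "Jordan_Normal_Form.Determinant" "HOL-Computational_Algebra.Polynomial" "HOL-Number_Theory.Cong"
begin

definition coeffZ :: "int poly \<Rightarrow> int \<Rightarrow> int" where
  "coeffZ h i = (if i < 0 then 0 else coeff h (nat i))"

(* M_d(h) : d x d matrix, (i,j) entry (1-based) c_{ip+j-d-1};
   here with 0-based indices i,j < d, i.e. entry c_{(i+1)p+(j+1)-d-1} *)
definition Mmat :: "nat \<Rightarrow> nat \<Rightarrow> int poly \<Rightarrow> int mat" where
  "Mmat p d h = mat d d (\<lambda>(i,j). coeffZ h (int (i+1) * int p + int (j+1) - int d - 1))"

definition gval :: "nat \<Rightarrow> int \<Rightarrow> int \<Rightarrow> int \<Rightarrow> rat" where
  "gval p r e d = (of_int (r*e*d) - of_int (d*(d+1)) / 2 * (of_nat p - 1)) / (of_int (r*(r-1)) / 2)"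

definition U_set :: "nat \<Rightarrow> (int \<times> int \<times> int) set" where
  "U_set p = {(r,e,d). r \<ge> 2 \<and> e \<ge> 1 \<and> 1 \<le> d \<and> d \<le> int p \<and>
      d * (int p - 1) \<le> r * e \<and> r * e \<le> r * (int p - 1) \<and> gval p r e d > 0 \<and>
      (if p \<noteq> 2 then (\<exists>k::int. gval p r e d = of_int (2*k)) else (\<exists>k::int. gval p r e d = of_int k))}"

end

theory Submission
  imports Defs "HOL-Computational_Algebra.Primes"
begin

(*
  Write p = rs + 1. With 0-based indices, the (i, j) entry of M_d((x^r - 1)^e) is the coefficient
  of x^n for n = r(i + 1)s + (i + j + 1 - d). All coefficients of (x^r - 1)^e sit at multiples of r,
  and |i + j + 1 - d| < d <= r, so the matrix is anti-diagonal with entries (-1)^(e-ks) C(e, ks).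
  Its determinant is (-1)^(d(d-1)/2 + sum_k (e - ks)) times the product of these binomials, and the
  exponent sum_k (e - ks) = de - s d(d+1)/2 is exactly (r - 1)g/2. No factor is divisible by p
  since ks <= e < p.
*)

lemma det_antidiagonal:
  fixes A :: "'a::comm_ring_1 mat"
  assumes "A \<in> carrier_mat n n"
    and "\<And>i j. i < n \<Longrightarrow> j < n \<Longrightarrow> i + j \<noteq> n - 1 \<Longrightarrow> A $$ (i, j) = 0"
  shows "det A = (-1) ^ (n * (n - 1) div 2) * (\<Prod>i<n. A $$ (i, n - 1 - i))"
  using assms
proof (induction n arbitrary: A)
  case 0
  then show ?case by (simp add: det_def)
next
  case (Suc m)
  let ?B = "mat_delete A 0 m"
  have "det A = (\<Sum>j<Suc m. A $$ (0, j) * cofactor A 0 j)"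
    by (rule laplace_expansion_row[OF Suc.prems(1)]) simp
  also have "\<dots> = A $$ (0, m) * cofactor A 0 m"
    using Suc.prems(2) by (simp add: sum.neutral)
  also have "cofactor A 0 m = (-1) ^ m * det ?B"
    unfolding cofactor_def by simp
  also have "det ?B = (-1) ^ (m * (m - 1) div 2) * (\<Prod>i<m. ?B $$ (i, m - 1 - i))"
    using Suc.prems by (intro Suc.IH) (auto simp: mat_delete_def)
  also have "(\<Prod>i<m. ?B $$ (i, m - 1 - i)) = (\<Prod>i<m. A $$ (Suc i, m - 1 - i))"
    using Suc.prems(1) by (intro prod.cong) (auto simp: mat_delete_def)
  finally have "det A = (-1) ^ (m + m * (m - 1) div 2) * (\<Prod>i<Suc m. A $$ (i, Suc m - 1 - i))"
    by (simp add: prod.lessThan_Suc_shift power_add algebra_simps del: prod.lessThan_Suc)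
  moreover have "m + m * (m - 1) div 2 = Suc m * (Suc m - 1) div 2"
    by (cases m) auto
  ultimately show ?case
    by simp
qed

lemma monom_one_minus_one_power:
  "(monom (1::'a::comm_ring_1) R - 1) ^ E
     = (\<Sum>k\<le>E. monom ((-1) ^ (E - k) * of_nat (E choose k)) (R * k))"
proof -
  have "(monom (1::'a) R - 1) ^ E = (monom 1 R + (-1)) ^ E" by simp
  also have "\<dots> = (\<Sum>k\<le>E. of_nat (E choose k) * monom 1 R ^ k * (-1) ^ (E - k))"
    by (rule binomial_ring)
  also have "\<dots> = (\<Sum>k\<le>E. monom ((-1) ^ (E - k) * of_nat (E choose k)) (R * k))"
  proof -
    have "(-1 :: 'a poly) = monom (-1) 0"
      by (simp add: monom_0 one_pCons)
    then show ?thesis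
      by (simp add: monom_power of_nat_monom mult_monom mult.commute)
  qed
  finally show ?thesis .
qed

lemma coeff_monom_one_minus_one_power:
  assumes "0 < R"
  shows "coeff ((monom (1::'a::comm_ring_1) R - 1) ^ E) n =
     (if R dvd n then (-1) ^ (E - n div R) * of_nat (E choose (n div R)) else 0)"
proof -
  have "R * k = n \<longleftrightarrow> R dvd n \<and> k = n div R" for k
    using assms by auto
  then show ?thesis
    by (auto simp: monom_one_minus_one_power coeff_sum coeff_monom binomial_eq_0)
qed

lemma coeffZ_of_nat: "coeffZ h (int n) = coeff h n"
  by (simp add: coeffZ_def)

lemma det_Mmat_monom_minus_one_power:
  fixes R S D E :: nat
  assumes "0 < R" "D \<le> R" "p = R * S + 1"
  shows "det (Mmat p D ((monom 1 R - 1) ^ E))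
    = (-1) ^ (D * (D - 1) div 2) * (\<Prod>k\<in>{1..D}. (-1) ^ (E - k * S) * int (E choose (k * S)))"
proof -
  define h :: "int poly" where "h = (monom 1 R - 1) ^ E"
  define A where "A = Mmat p D h"
  have entry: "A $$ (i, j) = coeffZ h (int R * int ((i + 1) * S) + (int i + int j + 1 - int D))"
    if "i < D" "j < D" for i j
    using that by (simp add: A_def Mmat_def assms(3) algebra_simps)
  have coeffZ_h_non_multiple: "coeffZ h (int R * a + b) = 0" if "b \<noteq> 0" "\<bar>b\<bar> < int R" for a b
  proof (cases "int R * a + b < 0")
    case False
    have "\<not> int R dvd int R * a + b"
      using that dvd_imp_le_int[of b "int R"] by (auto simp: dvd_add_right_iff)
    then have "\<not> R dvd nat (int R * a + b)"
      using False by (metis nat_0_le not_less of_nat_dvd_iff)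
    then show ?thesis
      using False assms(1) by (simp add: coeffZ_def h_def coeff_monom_one_minus_one_power)
  qed (simp add: coeffZ_def)
  have antidiagonal: "A $$ (i, D - 1 - i) = (-1) ^ (E - (i + 1) * S) * int (E choose ((i + 1) * S))"
    if "i < D" for i
  proof -
    have "A $$ (i, D - 1 - i) = coeffZ h (int (R * ((i + 1) * S)))"
      using entry[of i "D - 1 - i"] that by (simp add: of_nat_diff)
    also have "\<dots> = coeff h (R * ((i + 1) * S))"
      by (rule coeffZ_of_nat)
    finally show ?thesis
      using assms(1) by (simp add: h_def coeff_monom_one_minus_one_power)
  qed
  have "det A = (-1) ^ (D * (D - 1) div 2) * (\<Prod>i<D. A $$ (i, D - 1 - i))"
  proof (rule det_antidiagonal)
    show "A \<in> carrier_mat D D" by (simp add: A_def Mmat_def)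
    fix i j assume "i < D" "j < D" "i + j \<noteq> D - 1"
    then show "A $$ (i, j) = 0"
      using assms(2) by (auto simp: entry intro!: coeffZ_h_non_multiple)
  qed
  also have "(\<Prod>i<D. A $$ (i, D - 1 - i)) = (\<Prod>k\<in>{1..D}. (-1) ^ (E - k * S) * int (E choose (k * S)))"
    unfolding One_nat_def prod.atLeast1_atMost_eq by (rule prod.cong) (use antidiagonal in auto)
  finally show ?thesis
    by (simp add: A_def h_def)
qed

lemma U_set_bounds:
  assumes "(r, e, d) \<in> U_set p" "r * s = int p - 1"
  shows "2 \<le> r" "1 \<le> e" "1 \<le> d" "d \<le> r" "1 \<le> s" "d * s \<le> e" "e < int p"
proof -
  have r: "2 \<le> r" and "1 \<le> e" "1 \<le> d" and lower: "d * (int p - 1) \<le> r * e"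
    and upper: "r * e \<le> r * (int p - 1)"
    using assms(1) by (auto simp: U_set_def)
  from upper r have "e \<le> int p - 1" by simp
  with \<open>1 \<le> e\<close> assms(2) have "0 < r * s" by linarith
  with r have "1 \<le> s" by (simp add: zero_less_mult_iff)
  from lower have "r * (d * s) \<le> r * e"
    by (simp flip: assms(2) add: algebra_simps)
  with r have "d * s \<le> e" by simp
  with \<open>e \<le> int p - 1\<close> assms(2) have "d * s \<le> r * s" by linarith
  with \<open>1 \<le> s\<close> have "d \<le> r" by (simp add: mult_right_le_imp_le)
  show "2 \<le> r" "1 \<le> e" "1 \<le> d" "d \<le> r" "1 \<le> s" "d * s \<le> e" "e < int p"
    by fact+ (use \<open>e \<le> int p - 1\<close> in linarith)
qed

lemma gval_mult_pred_half:
  assumes "r * s = int p - 1" "r \<noteq> 0" "r \<noteq> 1"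
  shows "of_int (r - 1) * gval p r e d / 2 = of_int (d * e - s * (d * (d + 1) div 2))"
proof -
  have p: "(of_nat p - 1 :: rat) = of_int r * of_int s"
    by (metis assms(1) of_int_mult of_int_of_nat_eq of_int_1 of_int_diff)
  have "(of_int (d * (d + 1) div 2) :: rat) = of_int d * (of_int d + 1) / 2"
    by (subst of_int_div) auto
  then have "(of_int (d * e - s * (d * (d + 1) div 2)) :: rat)
      = of_int d * of_int e - of_int s * (of_int d * (of_int d + 1) / 2)"
    by simp
  then show ?thesis
    unfolding gval_def p using assms(2,3) by (simp add: field_simps)
qed

lemma sum_diff_multiples:
  fixes D S E :: nat
  assumes "D * S \<le> E"
  shows "int (\<Sum>k\<in>{1..D}. E - k * S) = int D * int E - int S * (int D * (int D + 1) div 2)"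
proof -
  have "int (\<Sum>k\<in>{1..D}. E - k * S) = (\<Sum>k\<in>{1..D}. int E - int S * int k)"
    unfolding of_nat_sum
  proof (rule sum.cong)
    fix k assume "k \<in> {1..D}"
    then have "k * S \<le> E" using assms by (meson atLeastAtMost_iff mult_le_mono1 order_trans)
    then show "int (E - k * S) = int E - int S * int k" by (simp add: of_nat_diff)
  qed simp
  also have "\<dots> = int D * int E - int S * (\<Sum>k\<in>{1..D}. int k)"
    by (simp add: sum_subtractf sum_distrib_left)
  finally show ?thesis
    using gauss_sum_from_Suc_0[of D, where ?'a = int] by simp
qed

lemma sign_exponent_eq_sum:
  fixes R S D E :: nat
  assumes "int R * int S = int p - 1" "2 \<le> R" "D * S \<le> E"
  shows "nat (int D * (int D - 1) div 2 + \<lfloor>of_int (int R - 1) * gval p (int R) (int E) (int D) / 2\<rfloor>)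
    = D * (D - 1) div 2 + (\<Sum>k\<in>{1..D}. E - k * S)"
proof -
  have "of_int (int R - 1) * gval p (int R) (int E) (int D) / 2
      = of_int (int D * int E - int S * (int D * (int D + 1) div 2))"
    using gval_mult_pred_half[OF assms(1)] assms(2) by simp
  then have "\<lfloor>of_int (int R - 1) * gval p (int R) (int E) (int D) / 2\<rfloor>
      = int D * int E - int S * (int D * (int D + 1) div 2)"
    by (simp only: floor_of_int)
  also have "\<dots> = int (\<Sum>k\<in>{1..D}. E - k * S)"
    using sum_diff_multiples[OF assms(3)] by simp
  finally have floor_eq: "\<lfloor>of_int (int R - 1) * gval p (int R) (int E) (int D) / 2\<rfloor>
      = int (\<Sum>k\<in>{1..D}. E - k * S)" .
  have "int D * (int D - 1) div 2 = int (D * (D - 1) div 2)"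
    by (cases D) (simp_all add: zdiv_int algebra_simps)
  then show ?thesis
    unfolding floor_eq by (simp only: nat_int flip: of_nat_add)
qed

lemma prime_not_dvd_binomial:
  assumes "prime p" "k \<le> n" "n < p"
  shows "\<not> p dvd n choose k"
proof -
  have "\<not> p dvd fact n"
    using assms by (simp add: prime_dvd_fact_iff)
  then show ?thesis
    using binomial_fact_lemma[OF \<open>k \<le> n\<close>] by (metis dvd_mult)
qed

lemma prime_not_dvd_prod_binomial:
  assumes "prime p" "D * S \<le> E" "E < p"
  shows "\<not> p dvd (\<Prod>k\<in>{1..D}. E choose (k * S))"
proof
  assume "p dvd (\<Prod>k\<in>{1..D}. E choose (k * S))"
  then obtain k where "k \<in> {1..D}" "p dvd E choose (k * S)"
    using assms(1) by (auto simp: prime_dvd_prod_iff)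
  moreover from this(1) have "k * S \<le> E"
    using assms(2) by (meson atLeastAtMost_iff mult_le_mono1 order_trans)
  ultimately show False
    using prime_not_dvd_binomial[OF assms(1) _ assms(3)] by blast
qed

theorem lemma7:
  fixes p :: nat and r e d s :: int
  assumes "prime p"
    and "(r, e, d) \<in> U_set p"
    and "r * s = int p - 1"
  shows "[det (Mmat p (nat d) ((monom 1 (nat r) - 1) ^ nat e))
          = (-1) ^ nat (d*(d-1) div 2 + \<lfloor>of_int (r-1) * gval p r e d / 2\<rfloor>)
            * (\<Prod>k\<in>{1..d}. int (nat e choose nat (k*s)))] (mod int p)
    \<and> \<not> [det (Mmat p (nat d) ((monom 1 (nat r) - 1) ^ nat e)) = 0] (mod int p)"
proof -
  note bounds = U_set_bounds[OF assms(2,3)]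
  then have "0 \<le> r" "0 \<le> d" "0 \<le> s" "0 \<le> e"
    by linarith+
  then obtain R D S E :: nat where reprs: "r = int R" "d = int D" "s = int S" "e = int E"
    by (metis zero_le_imp_eq_int)
  have sizes: "p = R * S + 1" "2 \<le> R" "D \<le> R" "D * S \<le> E" "E < p"
    using assms(3) bounds unfolding reprs by (simp_all flip: of_nat_mult of_nat_le_iff)
  let ?N = "\<Prod>k\<in>{1..D}. E choose (k * S)"
  let ?K = "D * (D - 1) div 2 + (\<Sum>k\<in>{1..D}. E - k * S)"
  have det: "det (Mmat p D ((monom 1 R - 1) ^ E)) = (-1) ^ ?K * int ?N"
    using det_Mmat_monom_minus_one_power[of R D p S E] sizes
    by (simp add: prod.distrib power_sum power_add)
  have sign: "nat (int D * (int D - 1) div 2 + \<lfloor>of_int (int R - 1) * gval p (int R) (int E) (int D) / 2\<rfloor>) = ?K"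
    using sign_exponent_eq_sum[of R S p D E] assms(3) sizes by (simp add: reprs)
  have "{1..int D} = int ` {1..D}"
    by (simp add: image_int_atLeastAtMost)
  then have prod: "(\<Prod>k\<in>{1..int D}. int (E choose nat (k * int S))) = int ?N"
    by (simp add: prod.reindex nat_mult_distrib)
  have "\<not> int p dvd (-1) ^ ?K * int ?N"
    using prime_not_dvd_prod_binomial[OF assms(1) sizes(4,5)]
    by (simp add: dvd_mult_unit_iff' is_unit_power_iff del: of_nat_prod)
  then show ?thesis
    unfolding reprs nat_int det sign prod by (simp add: cong_0_iff)
qed

end
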